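(* Let $(G,k,M^*,M)$ be a critical tuple and let $\mathcal{C}$ be a set of directed cycles of $G_M$, each with $w_M(C)\le0$, such that every $e\in E^+(C^+)$ is contained in some cycle of $\mathcal{C}$ and, for every $C\in\mathcal{C}$, $C\cap C^+$ is a single path. Then there exists a subset $\mathcal{C}'\subseteq\mathcal{C}$ such that every $e\in E^+(C^+)$ is contained in some cycle of $\mathcal{C}'$, for every $C\in\mathcal{C}'$ the set $C\cap C^+$ is a single path, and every $e\in E^-(C^+)$ is contained in at most two cycles of $\mathcal{C}'$.
   Context: $R(H)$ is the set of red edges of an edge set $H$. For a perfect matching $M$ of a red/blue edge-colored bipartite graph $G=(A\sqcup B,E)$, $G_M$ is the directed graph on $A\sqcup B$ with edges of $M$ oriented from $A$ to $B$ and other edges from $B$ to $A$, weighted by $w_M(e)=0$ for blue $e$, $-1$ for red $e\in M$, $+1$ for red $e\notin M$; $E^+(H)$ (resp. $E^-(H)$) is the set of red edges of $H$ not in $M$ (resp. in $M$), $w_M(H)=|E^+(H)|-|E^-(H)|$. Cycles are identified with edge sets. For an edge $e$, $M^e$ is a perfect matching containing $e$ with the minimum number of red edges among those containing $e$. A tuple $(G,k,M^*,M)$ is critical if: every edge of $G$ lies in some perfect matching; $|R(M^* )|=k$; $|R(M)|<\frac13k$; every directed cycle $C$ of $G_M$ with $w_M(C)>0$ has $|E^+(C)|>\frac23k$; and $|R(M^e)|<\frac13k$ for every red $e\in M^*\setminus M$. $C^+$ is the unique positive-weight directed cycle of $G_M$ contained in $M\Delta M^*$. *)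

theory Defs
  imports Complex_Main
begin

text \<open>A red/blue edge-coloured bipartite graph G = (A \<union> B, E) is given by disjoint
finite vertex sets A, B, an edge set E \<subseteq> A \<times> B (edge {a,b} stored as the pair (a,b),
a \<in> A, b \<in> B) and the set R \<subseteq> E of red edges (all other edges are blue).\<close>

definition bip_graph :: "'v set \<Rightarrow> 'v set \<Rightarrow> ('v \<times> 'v) set \<Rightarrow> ('v \<times> 'v) set \<Rightarrow> bool" where
  "bip_graph A B E R \<longleftrightarrow> finite A \<and> finite B \<and> A \<inter> B = {} \<and> E \<subseteq> A \<times> B \<and> R \<subseteq> E"

definition perfect_matching :: "'v set \<Rightarrow> 'v set \<Rightarrow> ('v \<times> 'v) set \<Rightarrow> ('v \<times> 'v) set \<Rightarrow> bool" where
  "perfect_matching A B E N \<longleftrightarrow> N \<subseteq> E \<and>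
     (\<forall>v \<in> A \<union> B. \<exists>!e. e \<in> N \<and> (v = fst e \<or> v = snd e))"

definition red_of :: "('v \<times> 'v) set \<Rightarrow> ('v \<times> 'v) set \<Rightarrow> ('v \<times> 'v) set" where
  "red_of R H = H \<inter> R"

definition Eplus :: "('v \<times> 'v) set \<Rightarrow> ('v \<times> 'v) set \<Rightarrow> ('v \<times> 'v) set \<Rightarrow> ('v \<times> 'v) set" where
  "Eplus R M H = red_of R H - M"

definition Eminus :: "('v \<times> 'v) set \<Rightarrow> ('v \<times> 'v) set \<Rightarrow> ('v \<times> 'v) set \<Rightarrow> ('v \<times> 'v) set" where
  "Eminus R M H = red_of R H \<inter> M"

definition wM :: "('v \<times> 'v) set \<Rightarrow> ('v \<times> 'v) set \<Rightarrow> ('v \<times> 'v) set \<Rightarrow> int" where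
  "wM R M H = int (card (Eplus R M H)) - int (card (Eminus R M H))"

text \<open>Arcs of G_M: edges of M oriented from A to B, the other edges of E from B to A.\<close>
definition arc_GM :: "('v \<times> 'v) set \<Rightarrow> ('v \<times> 'v) set \<Rightarrow> 'v \<Rightarrow> 'v \<Rightarrow> bool" where
  "arc_GM E M u v \<longleftrightarrow> (u, v) \<in> M \<or> ((v, u) \<in> E \<and> (v, u) \<notin> M)"

definition edge_of :: "('v \<times> 'v) set \<Rightarrow> 'v \<Rightarrow> 'v \<Rightarrow> 'v \<times> 'v" where
  "edge_of E u v = (if (u, v) \<in> E then (u, v) else (v, u))"

text \<open>Directed cycles of G_M, identified with their edge sets.\<close>
definition dcycle :: "('v \<times> 'v) set \<Rightarrow> ('v \<times> 'v) set \<Rightarrow> ('v \<times> 'v) set \<Rightarrow> bool" where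
  "dcycle E M C \<longleftrightarrow> (\<exists>vs. distinct vs \<and> length vs \<ge> 2 \<and>
     (\<forall>i < length vs. arc_GM E M (vs ! i) (vs ! ((i + 1) mod length vs))) \<and>
     C = {edge_of E (vs ! i) (vs ! ((i + 1) mod length vs)) | i. i < length vs})"

definition dpath :: "('v \<times> 'v) set \<Rightarrow> ('v \<times> 'v) set \<Rightarrow> ('v \<times> 'v) set \<Rightarrow> bool" where
  "dpath E M P \<longleftrightarrow> (\<exists>vs. distinct vs \<and> length vs \<ge> 2 \<and>
     (\<forall>i. i + 1 < length vs \<longrightarrow> arc_GM E M (vs ! i) (vs ! (i + 1))) \<and>
     P = {edge_of E (vs ! i) (vs ! (i + 1)) | i. i + 1 < length vs})"

definition red_Me :: "'v set \<Rightarrow> 'v set \<Rightarrow> ('v \<times> 'v) set \<Rightarrow> ('v \<times> 'v) set \<Rightarrow> 'v \<times> 'v \<Rightarrow> nat" where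
  "red_Me A B E R e = (LEAST n. \<exists>N. perfect_matching A B E N \<and> e \<in> N \<and> card (red_of R N) = n)"

definition critical ::
  "'v set \<Rightarrow> 'v set \<Rightarrow> ('v \<times> 'v) set \<Rightarrow> ('v \<times> 'v) set \<Rightarrow> nat \<Rightarrow> ('v \<times> 'v) set \<Rightarrow> ('v \<times> 'v) set \<Rightarrow> bool" where
  "critical A B E R k Ms M \<longleftrightarrow>
     bip_graph A B E R \<and> perfect_matching A B E Ms \<and> perfect_matching A B E M \<and>
     (\<forall>e \<in> E. \<exists>N. perfect_matching A B E N \<and> e \<in> N) \<and>
     card (red_of R Ms) = k \<and>
     3 * real (card (red_of R M)) < real k \<and>
     (\<forall>C. dcycle E M C \<and> wM R M C > 0 \<longrightarrow> 3 * real (card (Eplus R M C)) > 2 * real k) \<and>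
     (\<forall>e \<in> red_of R (Ms - M). 3 * real (red_Me A B E R e) < real k)"

end

theory Submission
  imports Defs "HOL-Number_Theory.Cong"
begin

text \<open>Pass to an inclusion-minimal subfamily of \<open>\<C>\<close> covering \<open>E\<^sup>+(C\<^sup>+)\<close>, so that every member
covers some edge of \<open>E\<^sup>+(C\<^sup>+)\<close> that no other member covers. The trace \<open>C \<inter> C\<^sup>+\<close> of a member
is a path inside the cycle \<open>C\<^sup>+\<close>, i.e. a cyclic interval of its edges. Among three cyclic
intervals through a common edge, one that neither starts first nor ends last is covered by the
other two, so it would have no private edge. Hence no edge of \<open>C\<^sup>+\<close> lies in three members.\<close>

definition cyclic_interval :: "nat \<Rightarrow> nat \<Rightarrow> nat \<Rightarrow> nat set" where
  "cyclic_interval n s L = (\<lambda>j. (s + j) mod n) ` {..<L}"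

text \<open>The common point \<open>x\<close> sits at position \<open>j\<^sub>i\<close> of the \<open>i\<close>-th interval; the third interval
starts no earlier than the first and ends no later than the second.\<close>

lemma cyclic_interval_subset_Un:
  fixes n s1 s2 s3 L1 L2 L3 j1 j2 j3 :: nat
  assumes "j1 < L1" "j2 < L2" "j3 < L3"
    and "(s1 + j1) mod n = x" "(s2 + j2) mod n = x" "(s3 + j3) mod n = x"
    and "j3 \<le> j1" "L3 - j3 \<le> L2 - j2"
  shows "cyclic_interval n s3 L3 \<subseteq> cyclic_interval n s1 L1 \<union> cyclic_interval n s2 L2"
proof
  fix y assume "y \<in> cyclic_interval n s3 L3"
  then obtain j where j: "j < L3" "y = (s3 + j) mod n" by (auto simp: cyclic_interval_def)
  show "y \<in> cyclic_interval n s1 L1 \<union> cyclic_interval n s2 L2"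
  proof (cases "j \<le> j3")
    case True
    define d where "d = j3 - j"
    have "[s3 + j + d = s1 + (j1 - d) + d] (mod n)"
      using assms True unfolding cong_def d_def by simp
    then have "y = (s1 + (j1 - d)) mod n"
      using j cong_add_rcancel_nat unfolding cong_def by blast
    moreover have "j1 - d < L1" using assms by simp
    ultimately show ?thesis by (auto simp: cyclic_interval_def)
  next
    case False
    define d where "d = j - j3"
    have "[s3 + j3 + d = s2 + j2 + d] (mod n)"
      using assms(5,6) unfolding cong_def by (metis mod_add_left_eq)
    then have "y = (s2 + (j2 + d)) mod n"
      using j False unfolding cong_def d_def by (simp add: add.assoc)
    moreover have "j2 + d < L2" using assms False j by (simp add: d_def)
    ultimately show ?thesis by (auto simp: cyclic_interval_def)
  qed
qed

lemma cyclic_interval_three_max_offset: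
  fixes n s1 s2 s3 L1 L2 L3 j1 j2 j3 :: nat
  assumes "j1 < L1" "j2 < L2" "j3 < L3"
    and "(s1 + j1) mod n = x" "(s2 + j2) mod n = x" "(s3 + j3) mod n = x"
    and "j1 \<le> j3" "j2 \<le> j3"
  shows "cyclic_interval n s1 L1 \<subseteq> cyclic_interval n s2 L2 \<union> cyclic_interval n s3 L3 \<or>
         cyclic_interval n s2 L2 \<subseteq> cyclic_interval n s1 L1 \<union> cyclic_interval n s3 L3"
  using cyclic_interval_subset_Un[of j3 L3 j2 L2 j1 L1 s3 n x s2 s1]
    cyclic_interval_subset_Un[of j3 L3 j1 L1 j2 L2 s3 n x s1 s2] assms
  by (cases "L1 - j1 \<le> L2 - j2") auto

lemma cyclic_interval_three:
  fixes n s1 s2 s3 L1 L2 L3 j1 j2 j3 :: nat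
  assumes "j1 < L1" "j2 < L2" "j3 < L3"
    and "(s1 + j1) mod n = x" "(s2 + j2) mod n = x" "(s3 + j3) mod n = x"
  shows "cyclic_interval n s1 L1 \<subseteq> cyclic_interval n s2 L2 \<union> cyclic_interval n s3 L3 \<or>
         cyclic_interval n s2 L2 \<subseteq> cyclic_interval n s1 L1 \<union> cyclic_interval n s3 L3 \<or>
         cyclic_interval n s3 L3 \<subseteq> cyclic_interval n s1 L1 \<union> cyclic_interval n s2 L2"
proof -
  consider "j1 \<le> j3" "j2 \<le> j3" | "j1 \<le> j2" "j3 \<le> j2" | "j2 \<le> j1" "j3 \<le> j1" by linarith
  then show ?thesis
  proof cases
    case 1
    then show ?thesis using cyclic_interval_three_max_offset[OF assms] by blast
  next
    case 2
    then show ?thesis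
      using cyclic_interval_three_max_offset[of j1 L1 j3 L3 j2 L2 s1 n x s3 s2] assms by blast
  next
    case 3
    then show ?thesis
      using cyclic_interval_three_max_offset[of j2 L2 j3 L3 j1 L1 s2 n x s3 s1] assms by blast
  qed
qed

lemma arc_GM_determined_by_edge:
  assumes "M \<subseteq> E" "asym E" "arc_GM E M u v" "arc_GM E M u' v'"
    and "edge_of E u v = edge_of E u' v'"
  shows "u = u' \<and> v = v'"
  using assms unfolding arc_GM_def edge_of_def by (auto dest: asymD split: if_splits)

lemma edge_of_arc_GM_in_edges:
  assumes "M \<subseteq> E" "arc_GM E M u v"
  shows "edge_of E u v \<in> E"
  using assms unfolding arc_GM_def edge_of_def by auto

definition cycle_edge :: "('v \<times> 'v) set \<Rightarrow> 'v list \<Rightarrow> nat \<Rightarrow> 'v \<times> 'v" where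
  "cycle_edge E vs i = edge_of E (vs ! i) (vs ! ((i + 1) mod length vs))"

lemma dcycle_iff_cycle_edge:
  "dcycle E M C \<longleftrightarrow> (\<exists>vs. distinct vs \<and> length vs \<ge> 2 \<and>
     (\<forall>i < length vs. arc_GM E M (vs ! i) (vs ! ((i + 1) mod length vs))) \<and>
     C = cycle_edge E vs ` {..<length vs})"
proof -
  have "{edge_of E (vs ! i) (vs ! ((i + 1) mod length vs)) | i. i < length vs} =
      cycle_edge E vs ` {..<length vs}" for vs
    by (auto simp: cycle_edge_def)
  then show ?thesis unfolding dcycle_def by simp
qed

lemma dcycle_subset:
  assumes "M \<subseteq> E" "dcycle E M C"
  shows "C \<subseteq> E"
proof -
  obtain vs where arcs: "\<forall>i < length vs. arc_GM E M (vs ! i) (vs ! ((i + 1) mod length vs))"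
    and C: "C = cycle_edge E vs ` {..<length vs}"
    using assms(2) unfolding dcycle_iff_cycle_edge by blast
  have "cycle_edge E vs i \<in> E" if "i < length vs" for i
    using edge_of_arc_GM_in_edges[OF assms(1)] arcs that unfolding cycle_edge_def by blast
  then show ?thesis unfolding C by blast
qed

lemma cycle_edge_inj_on:
  assumes "M \<subseteq> E" "asym E" "distinct vs"
    and arcs: "\<forall>i < length vs. arc_GM E M (vs ! i) (vs ! ((i + 1) mod length vs))"
  shows "inj_on (cycle_edge E vs) {..<length vs}"
proof
  fix i i' assume i: "i \<in> {..<length vs}" "i' \<in> {..<length vs}"
    and eq: "cycle_edge E vs i = cycle_edge E vs i'"
  have "vs ! i = vs ! i'"
    using arc_GM_determined_by_edge[OF assms(1,2)] arcs i eq unfolding cycle_edge_def by blast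
  then show "i = i'" using assms(3) i by (simp add: nth_eq_iff_index_eq)
qed

lemma arc_GM_along_cycle:
  assumes "M \<subseteq> E" "asym E"
    and arcs: "\<forall>i < length vs. arc_GM E M (vs ! i) (vs ! ((i + 1) mod length vs))"
    and "arc_GM E M u v" "edge_of E u v \<in> cycle_edge E vs ` {..<length vs}"
  obtains i where "i < length vs" "u = vs ! i" "v = vs ! ((i + 1) mod length vs)"
proof -
  obtain i where "i < length vs" "edge_of E u v = cycle_edge E vs i"
    using assms(5) by blast
  then show ?thesis
    using that arc_GM_determined_by_edge[OF assms(1,2,4)] arcs unfolding cycle_edge_def by blast
qed

lemma walk_along_cycle:
  assumes "M \<subseteq> E" "asym E" "distinct vs"
    and arcs: "\<forall>i < length vs. arc_GM E M (vs ! i) (vs ! ((i + 1) mod length vs))"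
    and ws_arcs: "\<forall>j. j + 1 < length ws \<longrightarrow> arc_GM E M (ws ! j) (ws ! (j + 1))"
    and ws_edges: "\<forall>j. j + 1 < length ws \<longrightarrow>
      edge_of E (ws ! j) (ws ! (j + 1)) \<in> cycle_edge E vs ` {..<length vs}"
    and "length ws \<ge> 2"
  obtains s where "\<forall>j < length ws. ws ! j = vs ! ((s + j) mod length vs)"
proof -
  define n where "n = length vs"
  have step: "\<exists>i < n. ws ! j = vs ! i \<and> ws ! (j + 1) = vs ! ((i + 1) mod n)"
    if "j + 1 < length ws" for j
    using arc_GM_along_cycle[OF assms(1,2) arcs] ws_arcs ws_edges that unfolding n_def by metis
  obtain s where "s < n" "ws ! 0 = vs ! s" using step[of 0] assms(7) by auto
  have "ws ! j = vs ! ((s + j) mod n)" if "j < length ws" for j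
    using that
  proof (induction j)
    case 0
    then show ?case using \<open>s < n\<close> \<open>ws ! 0 = vs ! s\<close> by simp
  next
    case (Suc j)
    obtain i where i: "i < n" "ws ! j = vs ! i" "ws ! (j + 1) = vs ! ((i + 1) mod n)"
      using step[of j] Suc.prems by auto
    have "vs ! i = vs ! ((s + j) mod n)" using Suc i by simp
    moreover have "(s + j) mod n < n" using i(1) by simp
    ultimately have "i = (s + j) mod n"
      using i(1) assms(3) unfolding n_def by (simp add: nth_eq_iff_index_eq)
    then show ?case using i(3) by (simp add: mod_Suc_eq)
  qed
  then show ?thesis using that unfolding n_def by blast
qed

lemma dpath_in_cycle_cyclic_interval:
  assumes "M \<subseteq> E" "asym E" "distinct vs"
    and arcs: "\<forall>i < length vs. arc_GM E M (vs ! i) (vs ! ((i + 1) mod length vs))"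
    and "dpath E M P" "P \<subseteq> cycle_edge E vs ` {..<length vs}"
  obtains s L where "P = cycle_edge E vs ` cyclic_interval (length vs) s L"
proof -
  define n where "n = length vs"
  obtain ws where ws: "length ws \<ge> 2"
    "\<forall>j. j + 1 < length ws \<longrightarrow> arc_GM E M (ws ! j) (ws ! (j + 1))"
    and P: "P = {edge_of E (ws ! j) (ws ! (j + 1)) | j. j + 1 < length ws}"
    using assms(5) unfolding dpath_def by blast
  obtain s where s: "\<forall>j < length ws. ws ! j = vs ! ((s + j) mod n)"
    using walk_along_cycle[OF assms(1-4) ws(2) _ ws(1)] assms(6) unfolding P n_def by blast
  have "edge_of E (ws ! j) (ws ! (j + 1)) = cycle_edge E vs ((s + j) mod n)"
    if "j + 1 < length ws" for j
    using s that unfolding cycle_edge_def n_def by (simp add: mod_Suc_eq)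
  then have "P = (\<lambda>j. cycle_edge E vs ((s + j) mod n)) ` {..<length ws - 1}"
    unfolding P by (force simp: less_diff_conv)
  then show ?thesis
    using that[of s "length ws - 1"] unfolding cyclic_interval_def image_image n_def by blast
qed

lemma three_dpaths_in_dcycle:
  assumes "M \<subseteq> E" "asym E" "dcycle E M C"
    and P: "dpath E M P" "P \<subseteq> C" "e \<in> P"
    and Q: "dpath E M Q" "Q \<subseteq> C" "e \<in> Q"
    and S: "dpath E M S" "S \<subseteq> C" "e \<in> S"
  shows "P \<subseteq> Q \<union> S \<or> Q \<subseteq> P \<union> S \<or> S \<subseteq> P \<union> Q"
proof -
  obtain vs where vs: "distinct vs"
    "\<forall>i < length vs. arc_GM E M (vs ! i) (vs ! ((i + 1) mod length vs))"
    and C: "C = cycle_edge E vs ` {..<length vs}"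
    using assms(3) unfolding dcycle_iff_cycle_edge by blast
  define n where "n = length vs"
  define I where "I = cyclic_interval n"
  obtain s1 L1 where 1: "P = cycle_edge E vs ` I s1 L1"
    using dpath_in_cycle_cyclic_interval[OF assms(1,2) vs P(1)] P(2) unfolding C I_def n_def .
  obtain s2 L2 where 2: "Q = cycle_edge E vs ` I s2 L2"
    using dpath_in_cycle_cyclic_interval[OF assms(1,2) vs Q(1)] Q(2) unfolding C I_def n_def .
  obtain s3 L3 where 3: "S = cycle_edge E vs ` I s3 L3"
    using dpath_in_cycle_cyclic_interval[OF assms(1,2) vs S(1)] S(2) unfolding C I_def n_def .
  obtain x where x: "x < n" "e = cycle_edge E vs x" using P C unfolding n_def by blast
  have offset: "\<exists>j < L. (s + j) mod n = x" if e_in: "e \<in> cycle_edge E vs ` I s L" for s L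
  proof -
    obtain j where "j < L" "e = cycle_edge E vs ((s + j) mod n)"
      using e_in unfolding I_def cyclic_interval_def by blast
    moreover have "(s + j) mod n < n" using x(1) by simp
    ultimately show ?thesis
      using cycle_edge_inj_on[OF assms(1,2) vs] x unfolding n_def inj_on_def by blast
  qed
  obtain j1 j2 j3 where "j1 < L1" "j2 < L2" "j3 < L3"
    "(s1 + j1) mod n = x" "(s2 + j2) mod n = x" "(s3 + j3) mod n = x"
    using offset P(3) Q(3) S(3) unfolding 1 2 3 by meson
  from cyclic_interval_three[OF this] show ?thesis
    unfolding 1 2 3 I_def by (metis image_Un image_mono)
qed

lemma obtain_irredundant_subcover:
  assumes "finite F" "U \<subseteq> \<Union>F"
  obtains D where "D \<subseteq> F" "U \<subseteq> \<Union>D" "\<And>X. X \<in> D \<Longrightarrow> \<not> U \<inter> X \<subseteq> \<Union>(D - {X})"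
proof -
  obtain D where D: "D \<subseteq> F" "U \<subseteq> \<Union>D"
    and min: "\<And>D'. D' \<subseteq> F \<and> U \<subseteq> \<Union>D' \<Longrightarrow> card D \<le> card D'"
    using ex_has_least_nat[of "\<lambda>D. D \<subseteq> F \<and> U \<subseteq> \<Union>D" F card] assms(2) by auto
  have "\<not> U \<inter> X \<subseteq> \<Union>(D - {X})" if X: "X \<in> D" for X
  proof
    assume "U \<inter> X \<subseteq> \<Union>(D - {X})"
    then have "U \<subseteq> \<Union>(D - {X})" using D(2) by blast
    then have "card D \<le> card (D - {X})" using D(1) by (intro min) blast
    moreover have "card (D - {X}) < card D"
      using X D(1) assms(1) by (meson card_Diff1_less finite_subset)
    ultimately show False by simp
  qed
  with D that show ?thesis by blast
qed

lemma irredundant_dpath_cover_card_le_2: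
  assumes "M \<subseteq> E" "asym E" "dcycle E M C" "U \<subseteq> C"
    and paths: "\<forall>X \<in> D. dpath E M (X \<inter> C)"
    and irredundant: "\<And>X. X \<in> D \<Longrightarrow> \<not> U \<inter> X \<subseteq> \<Union>(D - {X})"
    and "e \<in> C"
  shows "card {X \<in> D. e \<in> X} \<le> 2"
proof (rule ccontr)
  assume "\<not> ?thesis"
  then have "Suc (Suc (Suc 0)) \<le> card {X \<in> D. e \<in> X}" by simp
  then obtain X Y Z where XYZ: "X \<in> D" "Y \<in> D" "Z \<in> D" "e \<in> X" "e \<in> Y" "e \<in> Z"
    "X \<noteq> Y" "X \<noteq> Z" "Y \<noteq> Z"
    unfolding card_le_Suc_iff by auto
  have not_covered: "\<not> X' \<inter> C \<subseteq> (Y' \<inter> C) \<union> (Z' \<inter> C)"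
    if "X' \<in> D" "Y' \<in> D" "Z' \<in> D" "Y' \<noteq> X'" "Z' \<noteq> X'" for X' Y' Z'
    using irredundant[OF that(1)] that assms(4) by blast
  have "dpath E M (W \<inter> C)" "W \<inter> C \<subseteq> C" "e \<in> W \<inter> C" if "W \<in> {X, Y, Z}" for W
    using that paths XYZ assms(7) by auto
  then have "X \<inter> C \<subseteq> (Y \<inter> C) \<union> (Z \<inter> C) \<or> Y \<inter> C \<subseteq> (X \<inter> C) \<union> (Z \<inter> C) \<or>
      Z \<inter> C \<subseteq> (X \<inter> C) \<union> (Y \<inter> C)"
    by (intro three_dpaths_in_dcycle[OF assms(1-3)]) auto
  then show False
    using not_covered[of X Y Z] not_covered[of Y X Z] not_covered[of Z X Y] XYZ by auto
qed

theorem lemma8: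
  fixes A B :: "'v set" and E R M Ms Cp :: "('v \<times> 'v) set"
    and k :: nat and \<C> :: "('v \<times> 'v) set set"
  assumes crit: "critical A B E R k Ms M"
    and Cp: "dcycle E M Cp" "Cp \<subseteq> (M - Ms) \<union> (Ms - M)" "wM R M Cp > 0"
    and cyc: "\<forall>C \<in> \<C>. dcycle E M C \<and> wM R M C \<le> 0"
    and cover: "\<forall>e \<in> Eplus R M Cp. \<exists>C \<in> \<C>. e \<in> C"
    and path: "\<forall>C \<in> \<C>. dpath E M (C \<inter> Cp)"
  shows "\<exists>\<C>' \<subseteq> \<C>. (\<forall>e \<in> Eplus R M Cp. \<exists>C \<in> \<C>'. e \<in> C) \<and>
           (\<forall>C \<in> \<C>'. dpath E M (C \<inter> Cp)) \<and>
           (\<forall>e \<in> Eminus R M Cp. card {C \<in> \<C>'. e \<in> C} \<le> 2)"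
proof -
  have M: "M \<subseteq> E" and E: "E \<subseteq> A \<times> B" "A \<inter> B = {}" "finite A" "finite B"
    using crit unfolding critical_def perfect_matching_def bip_graph_def by auto
  have asym: "asym E" using E(1,2) by (intro asymI) blast
  have "\<C> \<subseteq> Pow E" using cyc dcycle_subset[OF M] by blast
  moreover have "finite E" using E by (meson finite_SigmaI finite_subset)
  ultimately have "finite \<C>" by (meson finite_Pow_iff finite_subset)
  moreover have "Eplus R M Cp \<subseteq> \<Union>\<C>" using cover by blast
  ultimately obtain D where D: "D \<subseteq> \<C>" "Eplus R M Cp \<subseteq> \<Union>D"
    and irredundant: "\<And>X. X \<in> D \<Longrightarrow> \<not> Eplus R M Cp \<inter> X \<subseteq> \<Union>(D - {X})"
    by (rule obtain_irredundant_subcover) (rule that)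
  have card: "card {C \<in> D. e \<in> C} \<le> 2" if "e \<in> Eminus R M Cp" for e
  proof (rule irredundant_dpath_cover_card_le_2[OF M asym Cp(1) _ _ irredundant])
    show "Eplus R M Cp \<subseteq> Cp" "e \<in> Cp"
      using that unfolding Eplus_def Eminus_def red_of_def by auto
    show "\<forall>X \<in> D. dpath E M (X \<inter> Cp)" using path D(1) by blast
  qed
  show ?thesis
  proof (intro exI[of _ D] conjI ballI)
    show "D \<subseteq> \<C>" by fact
    show "\<exists>C \<in> D. e \<in> C" if "e \<in> Eplus R M Cp" for e using D(2) that by blast
    show "dpath E M (C \<inter> Cp)" if "C \<in> D" for C using path D(1) that by blast
  qed (rule card)
qed

end
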